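(* Let $(X,d)$ be a metric space and let $\sigma$ be a reversible conical bicombing on $X$. Let $(e,E(X))$ denote the injective hull of $X$. Then there exists a reversible conical bicombing $\bar{\sigma}$ on $E(X)$ such that \[ e(\sigma_{xy}(t))=\bar{\sigma}_{e(x)e(y)}(t) \] for all $(x,y,t)\in X\times X\times[0,1]$.
   Context: A (geodesic) bicombing on a metric space $(X,d)$ is a map $\sigma\colon X\times X\times[0,1]\to X$ such that for every $(x,y)$ the path $\sigma_{xy}(\cdot):=\sigma(x,y,\cdot)$ is a metric geodesic from $x$ to $y$, i.e. $\sigma_{xy}(0)=x$, $\sigma_{xy}(1)=y$ and $d(\sigma_{xy}(s),\sigma_{xy}(t))=|s-t|\,d(x,y)$. It is conical if $d(\sigma_{xy}(t),\sigma_{x'y'}(t))\le (1-t)d(x,x')+t\,d(y,y')$ for all $x,y,x',y'\in X$, $t\in[0,1]$, and reversible if $\sigma_{xy}(t)=\sigma_{yx}(1-t)$ for all $x,y,t$. A metric space $Y$ is injective if for every metric space $B$, subset $A\subset B$ and 1-Lipschitz map $f\colon A\to Y$ there is a 1-Lipschitz extension $\bar f\colon B\to Y$. An injective hull of $X$ is a pair $(e,E(X))$ where $E(X)$ is an injective metric space and $e\colon X\to E(X)$ is an isometric embedding such that any 1-Lipschitz map $f\colon E(X)\to Z$ into a metric space $Z$ is an isometric embedding whenever $f\circ e$ is an isometric embedding. *)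

theory Defs
  imports "HOL-Analysis.Analysis"
begin

definition geodesic_path :: "'a metric \<Rightarrow> (real \<Rightarrow> 'a) \<Rightarrow> 'a \<Rightarrow> 'a \<Rightarrow> bool" where
  "geodesic_path m p x y \<longleftrightarrow>
     p 0 = x \<and> p 1 = y \<and> (\<forall>s\<in>{0..1}. p s \<in> mspace m) \<and>
     (\<forall>s\<in>{0..1}. \<forall>t\<in>{0..1}. mdist m (p s) (p t) = \<bar>s - t\<bar> * mdist m x y)"

definition bicombing :: "'a metric \<Rightarrow> ('a \<Rightarrow> 'a \<Rightarrow> real \<Rightarrow> 'a) \<Rightarrow> bool" where
  "bicombing m \<sigma> \<longleftrightarrow> (\<forall>x\<in>mspace m. \<forall>y\<in>mspace m. geodesic_path m (\<sigma> x y) x y)"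

definition conical_bicombing :: "'a metric \<Rightarrow> ('a \<Rightarrow> 'a \<Rightarrow> real \<Rightarrow> 'a) \<Rightarrow> bool" where
  "conical_bicombing m \<sigma> \<longleftrightarrow> bicombing m \<sigma> \<and>
     (\<forall>x\<in>mspace m. \<forall>y\<in>mspace m. \<forall>x'\<in>mspace m. \<forall>y'\<in>mspace m. \<forall>t\<in>{0..1}.
        mdist m (\<sigma> x y t) (\<sigma> x' y' t) \<le> (1 - t) * mdist m x x' + t * mdist m y y')"

definition reversible_bicombing :: "'a metric \<Rightarrow> ('a \<Rightarrow> 'a \<Rightarrow> real \<Rightarrow> 'a) \<Rightarrow> bool" where
  "reversible_bicombing m \<sigma> \<longleftrightarrow> bicombing m \<sigma> \<and>
     (\<forall>x\<in>mspace m. \<forall>y\<in>mspace m. \<forall>t\<in>{0..1}. \<sigma> x y t = \<sigma> y x (1 - t))"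

definition lip1_on :: "'a metric \<Rightarrow> 'b metric \<Rightarrow> 'a set \<Rightarrow> ('a \<Rightarrow> 'b) \<Rightarrow> bool" where
  "lip1_on m1 m2 A f \<longleftrightarrow> f ` A \<subseteq> mspace m2 \<and>
     (\<forall>a\<in>A. \<forall>b\<in>A. mdist m2 (f a) (f b) \<le> mdist m1 a b)"

definition isometric_embedding :: "'a metric \<Rightarrow> 'b metric \<Rightarrow> ('a \<Rightarrow> 'b) \<Rightarrow> bool" where
  "isometric_embedding m1 m2 f \<longleftrightarrow> f ` mspace m1 \<subseteq> mspace m2 \<and>
     (\<forall>a\<in>mspace m1. \<forall>b\<in>mspace m1. mdist m2 (f a) (f b) = mdist m1 a b)"

text \<open>Injectivity, with test metric spaces \<open>B\<close> ranging over metric spaces carried by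
  subsets of the type \<open>'c\<close> (HOL cannot quantify over all types inside a formula).\<close>
definition injective_metric_space :: "'c itself \<Rightarrow> 'b metric \<Rightarrow> bool" where
  "injective_metric_space (_::'c itself) Y \<longleftrightarrow>
     (\<forall>(B::'c metric) A f. A \<subseteq> mspace B \<and> lip1_on B Y A f \<longrightarrow>
        (\<exists>g. lip1_on B Y (mspace B) g \<and> (\<forall>a\<in>A. g a = f a)))"

text \<open>Injective hull \<open>(e, E)\<close> of \<open>X\<close>; test spaces for injectivity live on type \<open>'c\<close>,
  the target spaces \<open>Z\<close> of the minimality property live on type \<open>'d\<close>.\<close>
definition injective_hull ::
    "'c itself \<Rightarrow> 'd itself \<Rightarrow> 'a metric \<Rightarrow> 'b metric \<Rightarrow> ('a \<Rightarrow> 'b) \<Rightarrow> bool" where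
  "injective_hull TC (_::'d itself) X E e \<longleftrightarrow>
     injective_metric_space TC E \<and> isometric_embedding X E e \<and>
     (\<forall>(Z::'d metric) f. lip1_on E Z (mspace E) f \<and> isometric_embedding X Z (f \<circ> e)
        \<longrightarrow> isometric_embedding E Z f)"

end

theory Submission
  imports Defs
begin

(* Consider the measures (1 - t) delta_p + t delta_q on E with the Kantorovich-Rubinstein
   distance, the supremum of (integral phi d mu - integral phi d nu) over 1-Lipschitz phi.
   The assignment delta_p |-> p, (1 - t) delta_(e x) + t delta_(e y) |-> e (sigma x y t) is
   1-Lipschitz, so by injectivity of E it extends to a 1-Lipschitz map g on all these measures,
   and sigma' p q t = g ((1 - t) delta_p + t delta_q) is a conical reversible bicombing because
   the Kantorovich-Rubinstein distance already satisfies the geodesic and conical estimates.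
   The Lipschitz bound has two ingredients. For two geodesics of sigma whose endpoints are
   matched (which reversibility allows one to assume), the single test function
   min (d(., e y') - d(x, y')) (d(., e x') - d(x, x')) certifies it. And minimality of the hull
   makes every point p of E extremal with respect to e(X), from which the conical inequality
   yields that d(p, e (sigma x y t)) is convex in t. *)

lemma mdist_self [simp]: "x \<in> mspace m \<Longrightarrow> mdist m x x = 0"
  by simp

lemma mdist_le_0_iff [simp]:
  "x \<in> mspace m \<Longrightarrow> y \<in> mspace m \<Longrightarrow> mdist m x y \<le> 0 \<longleftrightarrow> x = y"
  by (metis mdist_nonneg mdist_zero order_antisym)

lemma mdist_pos_iff [simp]:
  "x \<in> mspace m \<Longrightarrow> y \<in> mspace m \<Longrightarrow> 0 < mdist m x y \<longleftrightarrow> x \<noteq> y"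
  by (simp add: less_le)

section \<open>Injective metric spaces\<close>

lemma injective_metric_space_nonempty:
  assumes "injective_metric_space TYPE('b option) (E :: 'b metric)"
  shows "mspace E \<noteq> {}"
proof -
  define B :: "'b option metric" where "B = metric ({None}, \<lambda>_ _. 0)"
  have mB: "mspace B = {None}"
    unfolding B_def by (rule Metric_space.mspace_metric) (auto simp: Metric_space_def)
  obtain g where "lip1_on B E (mspace B) g"
    using assms unfolding injective_metric_space_def
    by (metis empty_subsetI empty_iff lip1_on_def image_empty)
  then show ?thesis
    by (auto simp: lip1_on_def mB)
qed

lemma injective_point_below_metric_form:
  fixes E :: "'b metric"
  assumes inj: "injective_metric_space TYPE('b option) E"
    and form: "\<And>w w'. w \<in> mspace E \<Longrightarrow> w' \<in> mspace E \<Longrightarrow> mdist E w w' \<le> r w + r w'"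
    and lip: "\<And>w w'. w \<in> mspace E \<Longrightarrow> w' \<in> mspace E \<Longrightarrow> r w \<le> r w' + mdist E w w'"
  shows "\<exists>q\<in>mspace E. \<forall>w\<in>mspace E. mdist E q w \<le> r w"
proof (cases "\<exists>q\<in>mspace E. r q \<le> 0")
  case True
  then obtain q where "q \<in> mspace E" "r q \<le> 0"
    by blast
  with form[of q] show ?thesis
    by force
next
  case False
  then have pos: "w \<in> mspace E \<Longrightarrow> 0 < r w" for w
    by force
  \<comment> \<open>Extend \<open>E\<close> by a point \<open>None\<close> at distance \<open>r w\<close> from each \<open>w\<close>; its image under a
    1-Lipschitz retraction onto \<open>E\<close> is the required \<open>q\<close>. (The absolute values only
    make \<open>d\<close> nonnegative off \<open>S\<close>.)\<close>
  define S where "S = insert None (Some ` mspace E)"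
  define d where "d x y = (case (x, y) of
      (None, None) \<Rightarrow> 0 | (None, Some b) \<Rightarrow> \<bar>r b\<bar> | (Some a, None) \<Rightarrow> \<bar>r a\<bar>
    | (Some a, Some b) \<Rightarrow> mdist E a b)" for x y
  have "Metric_space S d"
  proof
    fix x y
    show "0 \<le> d x y" "d x y = d y x"
      by (auto simp: d_def mdist_commute split: option.splits)
  next
    fix x y
    assume "x \<in> S" "y \<in> S"
    then show "d x y = 0 \<longleftrightarrow> x = y"
      using pos by (auto simp: d_def S_def split: option.splits) (metis less_irrefl)+
  next
    fix x y z
    assume xyz: "x \<in> S" "y \<in> S" "z \<in> S"
    have abs_r: "\<bar>r a\<bar> = r a" if "a \<in> mspace E" for a
      using pos[OF that] by simp
    have tri: "mdist E a c \<le> mdist E a b + mdist E b c" "r c \<le> r b + mdist E b c"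
      "r a \<le> mdist E a b + r b" "mdist E a c \<le> r a + r c" "0 \<le> r a"
      if "a \<in> mspace E" "b \<in> mspace E" "c \<in> mspace E" for a b c
      using that lip[of c b] lip[of a b] form[of a c] mdist_triangle[of a E b c] pos[of a]
      by (simp_all add: mdist_commute)
    from xyz show "d x z \<le> d x y + d y z"
      unfolding S_def d_def
      by (cases x; cases y; cases z) (auto simp: abs_r tri)
  qed
  then have mB: "mspace (metric (S, d)) = S" "mdist (metric (S, d)) = d"
    by (simp_all add: Metric_space.mspace_metric Metric_space.mdist_metric)
  have "lip1_on (metric (S, d)) E (Some ` mspace E) the"
    by (auto simp: lip1_on_def mB d_def)
  moreover have "Some ` mspace E \<subseteq> S"
    by (auto simp: S_def)
  ultimately obtain g where g: "lip1_on (metric (S, d)) E S g" "\<forall>w\<in>mspace E. g (Some w) = w"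
    using inj[unfolded injective_metric_space_def, rule_format, of "Some ` mspace E" "metric (S, d)" the]
    unfolding mB by auto
  have "g None \<in> mspace E"
    using g(1) by (auto simp: lip1_on_def S_def)
  moreover have "mdist E (g None) w \<le> r w" if "w \<in> mspace E" for w
  proof -
    have "mdist E (g None) (g (Some w)) \<le> d None (Some w)"
      using g(1) that unfolding lip1_on_def mB by (simp add: S_def)
    then show ?thesis
      using g(2) that pos[OF that] by (simp add: d_def)
  qed
  ultimately show ?thesis
    by blast
qed

lemma injective_hyperconvex:
  fixes E :: "'b metric" and c :: "'i \<Rightarrow> 'b"
  assumes inj: "injective_metric_space TYPE('b option) E"
    and c: "\<And>i. i \<in> I \<Longrightarrow> c i \<in> mspace E"
    and radii: "\<And>i j. i \<in> I \<Longrightarrow> j \<in> I \<Longrightarrow> mdist E (c i) (c j) \<le> \<rho> i + \<rho> j"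
  shows "\<exists>q\<in>mspace E. \<forall>i\<in>I. mdist E q (c i) \<le> \<rho> i"
proof (cases "I = {}")
  case True
  then show ?thesis
    using injective_metric_space_nonempty[OF inj] by blast
next
  case False
  \<comment> \<open>the largest 1-Lipschitz function with \<open>r (c i) \<le> \<rho> i\<close>\<close>
  define r where "r w = (INF i\<in>I. \<rho> i + mdist E (c i) w)" for w
  have "bdd_below ((\<lambda>i. \<rho> i + mdist E (c i) w) ` I)" for w
  proof (rule bdd_belowI2)
    fix i
    assume "i \<in> I"
    then have "0 \<le> \<rho> i"
      using radii[of i i] c[of i] by simp
    then show "0 \<le> \<rho> i + mdist E (c i) w"
      by simp
  qed
  then have r_le: "r w \<le> \<rho> i + mdist E (c i) w" if "i \<in> I" for i w
    unfolding r_def using that by (rule cINF_lower)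
  have form: "mdist E w w' \<le> r w + r w'" if "w \<in> mspace E" "w' \<in> mspace E" for w w'
  proof -
    have "mdist E w w' - r w' \<le> \<rho> i + mdist E (c i) w" if i: "i \<in> I" for i
    proof -
      have "mdist E w w' - \<rho> i - mdist E (c i) w \<le> \<rho> j + mdist E (c j) w'" if j: "j \<in> I" for j
      proof -
        have "mdist E w w' \<le> mdist E w (c i) + mdist E (c i) (c j) + mdist E (c j) w'"
          using mdist_triangle[of w E "c i" w'] mdist_triangle[of "c i" E "c j" w'] \<open>w \<in> mspace E\<close>
            \<open>w' \<in> mspace E\<close> c[OF i] c[OF j] by linarith
        then show ?thesis
          using radii[OF i j] by (simp add: mdist_commute)
      qed
      then have "mdist E w w' - \<rho> i - mdist E (c i) w \<le> r w'"
        unfolding r_def using False by (intro cINF_greatest)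
      then show ?thesis
        by simp
    qed
    then have "mdist E w w' - r w' \<le> r w"
      unfolding r_def[of w] using False by (intro cINF_greatest)
    then show ?thesis
      by simp
  qed
  have lip: "r w \<le> r w' + mdist E w w'" if w: "w \<in> mspace E" "w' \<in> mspace E" for w w'
  proof -
    have "r w - mdist E w w' \<le> \<rho> j + mdist E (c j) w'" if j: "j \<in> I" for j
      using r_le[OF j, of w] mdist_triangle[of "c j" E w' w] w c[OF j]
      by (simp add: mdist_commute)
    then have "r w - mdist E w w' \<le> r w'"
      unfolding r_def[of w'] using False by (intro cINF_greatest)
    then show ?thesis
      by simp
  qed
  obtain q where q: "q \<in> mspace E" "\<And>w. w \<in> mspace E \<Longrightarrow> mdist E q w \<le> r w"
    using injective_point_below_metric_form[OF inj form lip] by blast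
  have "mdist E q (c i) \<le> \<rho> i" if "i \<in> I" for i
    using q(2)[OF c[OF that]] r_le[OF that, of "c i"] c[OF that] by simp
  with q(1) show ?thesis
    by blast
qed

definition nonexpansive_rel :: "'a metric \<Rightarrow> 'b metric \<Rightarrow> ('a \<times> 'b) set \<Rightarrow> bool" where
  "nonexpansive_rel B E R \<longleftrightarrow> R \<subseteq> mspace B \<times> mspace E \<and>
     pairwise (\<lambda>(a, u) (b, v). mdist E u v \<le> mdist B a b) R"

lemma nonexpansive_relD:
  assumes "nonexpansive_rel B E R" "(a, u) \<in> R" "(b, v) \<in> R"
  shows "mdist E u v \<le> mdist B a b"
proof (cases "(a, u) = (b, v)")
  case True
  then show ?thesis
    using assms(1,2) by (auto simp: nonexpansive_rel_def)
next
  case False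
  then show ?thesis
    using assms by (fastforce simp: nonexpansive_rel_def pairwise_def)
qed

lemma nonexpansive_rel_insertI:
  assumes "nonexpansive_rel B E R" "b \<in> mspace B" "v \<in> mspace E"
    and "\<And>a u. (a, u) \<in> R \<Longrightarrow> mdist E v u \<le> mdist B b a"
  shows "nonexpansive_rel B E (insert (b, v) R)"
  using assms by (auto simp: nonexpansive_rel_def pairwise_insert mdist_commute)

lemma injective_nonexpansive_rel_insert:
  fixes E :: "'b metric" and B :: "'c metric"
  assumes inj: "injective_metric_space TYPE('b option) E"
    and R: "nonexpansive_rel B E R" and b: "b \<in> mspace B"
  shows "\<exists>v. nonexpansive_rel B E (insert (b, v) R)"
proof -
  have "\<exists>v\<in>mspace E. \<forall>i\<in>R. mdist E v (snd i) \<le> mdist B b (fst i)"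
  proof (rule injective_hyperconvex[OF inj])
    fix i j
    assume ij: "i \<in> R" "j \<in> R"
    then have "fst i \<in> mspace B" "fst j \<in> mspace B"
      using R by (auto simp: nonexpansive_rel_def)
    then have "mdist B (fst i) (fst j) \<le> mdist B b (fst i) + mdist B b (fst j)"
      using mdist_triangle[of "fst i" B b "fst j"] b by (simp add: mdist_commute)
    moreover have "mdist E (snd i) (snd j) \<le> mdist B (fst i) (fst j)"
      using nonexpansive_relD[OF R, of "fst i" "snd i" "fst j" "snd j"] ij by simp
    ultimately show "mdist E (snd i) (snd j) \<le> mdist B b (fst i) + mdist B b (fst j)"
      by linarith
  qed (use R in \<open>auto simp: nonexpansive_rel_def\<close>)
  then show ?thesis
    using R b by (fastforce intro: nonexpansive_rel_insertI)
qed

lemma nonexpansive_rel_maximal: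
  assumes R: "nonexpansive_rel B E R"
  obtains M where "R \<subseteq> M" "nonexpansive_rel B E M"
    "\<And>G. nonexpansive_rel B E G \<Longrightarrow> M \<subseteq> G \<Longrightarrow> G = M"
proof -
  define P where "P = {G. R \<subseteq> G \<and> nonexpansive_rel B E G}"
  have "\<exists>U\<in>P. \<forall>G\<in>C. G \<subseteq> U" if C: "C \<in> chains P" for C
  proof
    have chain: "chain\<^sub>\<subseteq> (insert R C)"
      using C unfolding chains_def chain_subset_def P_def by blast
    have "pairwise (\<lambda>(a, u) (b, v). mdist E u v \<le> mdist B a b) (\<Union>(insert R C))"
      using C R unfolding chains_def P_def nonexpansive_rel_def
      by (intro pairwise_chain_Union[OF _ chain]) blast
    moreover have "\<Union>(insert R C) \<subseteq> mspace B \<times> mspace E"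
      using C R unfolding chains_def P_def nonexpansive_rel_def by blast
    ultimately show "\<Union>(insert R C) \<in> P"
      unfolding P_def nonexpansive_rel_def by blast
  qed blast
  then obtain M where M: "M \<in> P" and max: "\<And>G. G \<in> P \<Longrightarrow> M \<subseteq> G \<Longrightarrow> G = M"
    using Zorn_Lemma2[of P] by auto
  show thesis
  proof (rule that)
    show "R \<subseteq> M" "nonexpansive_rel B E M"
      using M by (simp_all add: P_def)
    show "G = M" if "nonexpansive_rel B E G" "M \<subseteq> G" for G
      using that M by (intro max) (auto simp: P_def)
  qed
qed

lemma injective_nonexpansive_rel_extension:
  fixes E :: "'b metric" and B :: "'c metric"
  assumes inj: "injective_metric_space TYPE('b option) E" and R: "nonexpansive_rel B E R"
  shows "\<exists>g. lip1_on B E (mspace B) g \<and> (\<forall>(a, u)\<in>R. g a = u)"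
proof -
  obtain M where RM: "R \<subseteq> M" and ME: "nonexpansive_rel B E M"
    and max: "\<And>G. nonexpansive_rel B E G \<Longrightarrow> M \<subseteq> G \<Longrightarrow> G = M"
    using nonexpansive_rel_maximal[OF R] by blast
  have "\<exists>v. (b, v) \<in> M" if b: "b \<in> mspace B" for b
  proof -
    obtain v where "nonexpansive_rel B E (insert (b, v) M)"
      using injective_nonexpansive_rel_insert[OF inj ME b] by blast
    then have "insert (b, v) M = M"
      by (intro max) auto
    then show ?thesis
      by blast
  qed
  then obtain g where gM: "\<And>b. b \<in> mspace B \<Longrightarrow> (b, g b) \<in> M"
    by (metis someI_ex)
  have gE: "g b \<in> mspace E" if "b \<in> mspace B" for b
    using gM[OF that] ME unfolding nonexpansive_rel_def by blast
  have "lip1_on B E (mspace B) g"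
    unfolding lip1_on_def using gE nonexpansive_relD[OF ME gM gM] by blast
  moreover have "g a = u" if "(a, u) \<in> R" for a u
  proof -
    have "a \<in> mspace B" "u \<in> mspace E"
      using that R unfolding nonexpansive_rel_def by blast+
    moreover have "mdist E (g a) u \<le> mdist B a a"
      using nonexpansive_relD[OF ME gM] RM that \<open>a \<in> mspace B\<close> by blast
    ultimately show ?thesis
      using gE[of a] by simp
  qed
  ultimately show ?thesis
    by auto
qed

section \<open>Two-point measures and the Kantorovich-Rubinstein distance\<close>

text \<open>\<open>convex_delta p q t\<close> is the measure \<open>(1 - t)\<delta>\<^sub>p + t\<delta>\<^sub>q\<close>, as a weight function.\<close>

definition convex_delta :: "'b \<Rightarrow> 'b \<Rightarrow> real \<Rightarrow> 'b \<Rightarrow> real" where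
  "convex_delta p q t = (\<lambda>w. (if w = p then 1 - t else 0) + (if w = q then t else 0))"

definition fs_integral :: "('b \<Rightarrow> real) \<Rightarrow> ('b \<Rightarrow> real) \<Rightarrow> real" where
  "fs_integral \<phi> \<mu> = (\<Sum>w | \<mu> w \<noteq> 0. \<phi> w * \<mu> w)"

definition lip1_funs :: "'b metric \<Rightarrow> ('b \<Rightarrow> real) set" where
  "lip1_funs E = {\<phi>. \<forall>a\<in>mspace E. \<forall>b\<in>mspace E. \<phi> a - \<phi> b \<le> mdist E a b}"

definition convex_deltas :: "'b metric \<Rightarrow> ('b \<Rightarrow> real) set" where
  "convex_deltas E = {convex_delta p q t |p q t. p \<in> mspace E \<and> q \<in> mspace E \<and> t \<in> {0..1}}"

text \<open>The value \<open>0\<close> outside \<open>convex_deltas E\<close> only serves to make \<open>kr_dist E\<close> a total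
  function, as required by \<open>Metric_space\<close>.\<close>

definition kr_dist :: "'b metric \<Rightarrow> ('b \<Rightarrow> real) \<Rightarrow> ('b \<Rightarrow> real) \<Rightarrow> real" where
  "kr_dist E \<mu> \<nu> = (if \<mu> \<in> convex_deltas E \<and> \<nu> \<in> convex_deltas E
     then (SUP \<phi>\<in>lip1_funs E. fs_integral \<phi> \<mu> - fs_integral \<phi> \<nu>) else 0)"

lemma fs_integral_convex_delta [simp]:
  "fs_integral \<phi> (convex_delta p q t) = (1 - t) * \<phi> p + t * \<phi> q"
proof -
  have "fs_integral \<phi> (convex_delta p q t) = (\<Sum>w\<in>{p, q}. \<phi> w * convex_delta p q t w)"
    unfolding fs_integral_def by (rule sum.mono_neutral_left) (auto simp: convex_delta_def)
  then show ?thesis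
    by (cases "p = q") (auto simp: convex_delta_def algebra_simps)
qed

lemma fs_integral_uminus [simp]: "fs_integral (\<lambda>w. - \<phi> w) \<mu> = - fs_integral \<phi> \<mu>"
  by (simp add: fs_integral_def sum_negf)

lemma lip1_funsD: "\<phi> \<in> lip1_funs E \<Longrightarrow> a \<in> mspace E \<Longrightarrow> b \<in> mspace E \<Longrightarrow> \<phi> a - \<phi> b \<le> mdist E a b"
  by (simp add: lip1_funs_def)

lemma lip1_funs_abs:
  "\<phi> \<in> lip1_funs E \<Longrightarrow> a \<in> mspace E \<Longrightarrow> b \<in> mspace E \<Longrightarrow> \<bar>\<phi> a - \<phi> b\<bar> \<le> mdist E a b"
  using lip1_funsD[of \<phi> E a b] lip1_funsD[of \<phi> E b a] by (simp add: mdist_commute)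

lemma lip1_funs_uminus: "\<phi> \<in> lip1_funs E \<Longrightarrow> (\<lambda>w. - \<phi> w) \<in> lip1_funs E"
  using lip1_funs_abs[of \<phi> E] by (auto simp: lip1_funs_def abs_le_iff)

lemma lip1_funs_mdist: "q \<in> mspace E \<Longrightarrow> (\<lambda>w. mdist E w q) \<in> lip1_funs E"
  unfolding lip1_funs_def using mdist_triangle[of _ E _ q] by (simp add: algebra_simps)

lemma lip1_funs_diff_const: "\<phi> \<in> lip1_funs E \<Longrightarrow> (\<lambda>w. \<phi> w - c) \<in> lip1_funs E"
  by (simp add: lip1_funs_def)

lemma lip1_funs_min:
  assumes "\<phi> \<in> lip1_funs E" "\<psi> \<in> lip1_funs E"
  shows "(\<lambda>w. min (\<phi> w) (\<psi> w)) \<in> lip1_funs E"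
  unfolding lip1_funs_def
proof (intro CollectI ballI)
  fix a b
  assume "a \<in> mspace E" "b \<in> mspace E"
  then have "\<phi> a - \<phi> b \<le> mdist E a b" "\<psi> a - \<psi> b \<le> mdist E a b"
    using assms by (simp_all add: lip1_funsD)
  then show "min (\<phi> a) (\<psi> a) - min (\<phi> b) (\<psi> b) \<le> mdist E a b"
    unfolding min_def by auto
qed

lemma lip1_funs_bump:
  assumes "w0 \<in> mspace E"
  shows "(\<lambda>w. max 0 (r - mdist E w w0)) \<in> lip1_funs E"
  unfolding lip1_funs_def
proof (intro CollectI ballI)
  fix a b
  assume "a \<in> mspace E" "b \<in> mspace E"
  then have "mdist E b w0 \<le> mdist E a b + mdist E a w0" "0 \<le> mdist E a b"
    using mdist_triangle[of b E a w0] assms by (simp_all add: mdist_commute)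
  then show "max 0 (r - mdist E a w0) - max 0 (r - mdist E b w0) \<le> mdist E a b"
    by (smt (verit))
qed

lemma lip1_funs_scaled_le:
  assumes "\<phi> \<in> lip1_funs E" "a \<in> mspace E" "b \<in> mspace E" "0 \<le> c" "c \<le> 1"
  shows "c * (\<phi> a - \<phi> b) \<le> mdist E a b"
proof -
  have "c * (\<phi> a - \<phi> b) \<le> c * mdist E a b"
    using assms lip1_funsD by (intro mult_left_mono) auto
  also have "\<dots> \<le> mdist E a b"
    using assms mult_left_le_one_le[of "mdist E a b" c] by simp
  finally show ?thesis .
qed

lemma convex_deltasI:
  "p \<in> mspace E \<Longrightarrow> q \<in> mspace E \<Longrightarrow> t \<in> {0..1} \<Longrightarrow> convex_delta p q t \<in> convex_deltas E"
  by (auto simp: convex_deltas_def)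

lemma convex_deltasE:
  assumes "\<mu> \<in> convex_deltas E"
  obtains p q t where "\<mu> = convex_delta p q t" "p \<in> mspace E" "q \<in> mspace E" "t \<in> {0..1}"
  using assms by (auto simp: convex_deltas_def)

lemma convex_delta_flip: "convex_delta p q t = convex_delta q p (1 - t)"
  by (auto simp: convex_delta_def)

lemma convex_delta_0: "convex_delta p q 0 = convex_delta p p 0"
  by (auto simp: convex_delta_def)

lemma convex_delta_1: "convex_delta p q 1 = convex_delta q q 0"
  by (auto simp: convex_delta_def)

lemma kr_dist_bdd_above:
  assumes "\<mu> \<in> convex_deltas E" "\<nu> \<in> convex_deltas E"
  shows "bdd_above ((\<lambda>\<phi>. fs_integral \<phi> \<mu> - fs_integral \<phi> \<nu>) ` lip1_funs E)"
proof -
  obtain p q t where \<mu>: "\<mu> = convex_delta p q t" "p \<in> mspace E" "q \<in> mspace E" "t \<in> {0..1}"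
    using assms(1) by (rule convex_deltasE)
  obtain p' q' s where \<nu>: "\<nu> = convex_delta p' q' s" "p' \<in> mspace E" "q' \<in> mspace E" "s \<in> {0..1}"
    using assms(2) by (rule convex_deltasE)
  show ?thesis
  proof (rule bdd_aboveI2)
    fix \<phi>
    assume \<phi>: "\<phi> \<in> lip1_funs E"
    have "fs_integral \<phi> \<mu> - fs_integral \<phi> \<nu>
        = (1 - t) * (\<phi> p - \<phi> p') + t * (\<phi> q - \<phi> p') + s * (\<phi> p' - \<phi> q')"
      by (simp add: \<mu> \<nu> algebra_simps)
    also have "\<dots> \<le> mdist E p p' + mdist E q p' + mdist E p' q'"
      using \<mu> \<nu> by (intro add_mono lip1_funs_scaled_le[OF \<phi>]) auto
    finally show "fs_integral \<phi> \<mu> - fs_integral \<phi> \<nu> \<le> mdist E p p' + mdist E q p' + mdist E p' q'" .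
  qed
qed

lemma kr_dist_ge:
  assumes "\<mu> \<in> convex_deltas E" "\<nu> \<in> convex_deltas E" "\<phi> \<in> lip1_funs E"
  shows "fs_integral \<phi> \<mu> - fs_integral \<phi> \<nu> \<le> kr_dist E \<mu> \<nu>"
  using assms cSUP_upper[OF assms(3) kr_dist_bdd_above[OF assms(1,2)]] by (simp add: kr_dist_def)

lemma kr_dist_le:
  assumes "\<mu> \<in> convex_deltas E" "\<nu> \<in> convex_deltas E"
    and "\<And>\<phi>. \<phi> \<in> lip1_funs E \<Longrightarrow> fs_integral \<phi> \<mu> - fs_integral \<phi> \<nu> \<le> K"
  shows "kr_dist E \<mu> \<nu> \<le> K"
proof -
  have "(\<lambda>_. 0) \<in> lip1_funs E"
    by (simp add: lip1_funs_def)
  then show ?thesis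
    using assms by (auto simp: kr_dist_def intro: cSUP_least)
qed

lemma kr_dist_ge_abs:
  assumes "\<mu> \<in> convex_deltas E" "\<nu> \<in> convex_deltas E" "\<phi> \<in> lip1_funs E"
  shows "\<bar>fs_integral \<phi> \<mu> - fs_integral \<phi> \<nu>\<bar> \<le> kr_dist E \<mu> \<nu>"
  using kr_dist_ge[OF assms] kr_dist_ge[OF assms(1,2) lip1_funs_uminus[OF assms(3)]] by simp

lemma kr_dist_nonneg: "0 \<le> kr_dist E \<mu> \<nu>"
proof (cases "\<mu> \<in> convex_deltas E \<and> \<nu> \<in> convex_deltas E")
  case True
  moreover have "(\<lambda>_. 0) \<in> lip1_funs E"
    by (simp add: lip1_funs_def)
  ultimately show ?thesis
    using kr_dist_ge_abs[of \<mu> E \<nu> "\<lambda>_. 0"] by (meson abs_ge_zero order_trans)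
qed (auto simp: kr_dist_def)

lemma kr_dist_commute: "kr_dist E \<mu> \<nu> = kr_dist E \<nu> \<mu>"
proof -
  have "kr_dist E \<mu> \<nu> \<le> kr_dist E \<nu> \<mu>" if "\<mu> \<in> convex_deltas E" "\<nu> \<in> convex_deltas E" for \<mu> \<nu>
    using that kr_dist_ge_abs[OF that(2,1)] by (intro kr_dist_le) (auto simp: abs_le_iff)
  then show ?thesis
    by (metis kr_dist_def order_antisym)
qed

lemma kr_dist_self: "kr_dist E \<mu> \<mu> = 0"
proof (cases "\<mu> \<in> convex_deltas E")
  case True
  then have "kr_dist E \<mu> \<mu> \<le> 0"
    by (intro kr_dist_le) auto
  then show ?thesis
    using kr_dist_nonneg[of E \<mu> \<mu>] by linarith
qed (simp add: kr_dist_def)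

lemma kr_dist_triangle:
  assumes "\<mu> \<in> convex_deltas E" "\<nu> \<in> convex_deltas E" "\<rho> \<in> convex_deltas E"
  shows "kr_dist E \<mu> \<rho> \<le> kr_dist E \<mu> \<nu> + kr_dist E \<nu> \<rho>"
  using kr_dist_ge[OF assms(1,2)] kr_dist_ge[OF assms(2,3)]
  by (intro kr_dist_le[OF assms(1,3)]) fastforce

lemma kr_dist_pos:
  assumes \<mu>: "\<mu> \<in> convex_deltas E" and \<nu>: "\<nu> \<in> convex_deltas E" and "\<mu> \<noteq> \<nu>"
  shows "0 < kr_dist E \<mu> \<nu>"
proof -
  obtain p q t where \<mu>_eq: "\<mu> = convex_delta p q t" and pq: "p \<in> mspace E" "q \<in> mspace E"
    using \<mu> by (rule convex_deltasE)
  obtain p' q' s where \<nu>_eq: "\<nu> = convex_delta p' q' s" and pq': "p' \<in> mspace E" "q' \<in> mspace E"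
    using \<nu> by (rule convex_deltasE)
  define T where "T = {p, q, p', q'}"
  obtain w0 where w0: "\<mu> w0 \<noteq> \<nu> w0"
    using \<open>\<mu> \<noteq> \<nu>\<close> by blast
  then have "w0 \<in> T"
    by (auto simp: \<mu>_eq \<nu>_eq T_def convex_delta_def split: if_splits)
  have T: "T \<subseteq> mspace E" "finite T"
    using pq pq' by (auto simp: T_def)
  \<comment> \<open>A bump of height \<open>r\<close> at \<open>w0\<close> that vanishes on the rest of the supports separates \<open>\<mu>\<close> and \<open>\<nu>\<close>.\<close>
  define r where "r = Min (insert 1 (mdist E w0 ` (T - {w0})))"
  have "0 < r"
    unfolding r_def using T \<open>w0 \<in> T\<close> by (subst Min_gr_iff) (auto simp: subset_iff)
  have r_le: "r \<le> mdist E w0 v" if "v \<in> T - {w0}" for v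
    unfolding r_def using T that by (intro Min_le) auto
  define \<phi> where "\<phi> w = max 0 (r - mdist E w w0)" for w
  have "\<phi> \<in> lip1_funs E"
    unfolding \<phi>_def using T \<open>w0 \<in> T\<close> by (intro lip1_funs_bump) auto
  have \<phi>_T: "\<phi> v = (if v = w0 then r else 0)" if "v \<in> T" for v
    using that r_le[of v] T \<open>w0 \<in> T\<close> \<open>0 < r\<close> by (auto simp: \<phi>_def mdist_commute)
  have "fs_integral \<phi> \<mu> = r * \<mu> w0"
    using \<phi>_T[of p] \<phi>_T[of q] unfolding \<mu>_eq fs_integral_convex_delta
    by (auto simp: T_def convex_delta_def algebra_simps)
  moreover have "fs_integral \<phi> \<nu> = r * \<nu> w0"
    using \<phi>_T[of p'] \<phi>_T[of q'] unfolding \<nu>_eq fs_integral_convex_delta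
    by (auto simp: T_def convex_delta_def algebra_simps)
  ultimately have "0 < \<bar>fs_integral \<phi> \<mu> - fs_integral \<phi> \<nu>\<bar>"
    using \<open>0 < r\<close> w0 by (simp add: right_diff_distrib[symmetric] abs_mult)
  also have "\<dots> \<le> kr_dist E \<mu> \<nu>"
    by (rule kr_dist_ge_abs) fact+
  finally show ?thesis .
qed

definition kr_space :: "'b metric \<Rightarrow> ('b \<Rightarrow> real) metric" where
  "kr_space E = metric (convex_deltas E, kr_dist E)"

lemma Metric_space_kr_dist: "Metric_space (convex_deltas E) (kr_dist E)"
proof
  fix \<mu> \<nu> \<rho>
  show "0 \<le> kr_dist E \<mu> \<nu>" "kr_dist E \<mu> \<nu> = kr_dist E \<nu> \<mu>"
    by (rule kr_dist_nonneg, rule kr_dist_commute)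
  assume "\<mu> \<in> convex_deltas E" "\<nu> \<in> convex_deltas E"
  then show "kr_dist E \<mu> \<nu> = 0 \<longleftrightarrow> \<mu> = \<nu>"
    using kr_dist_pos[of \<mu> E \<nu>] by (cases "\<mu> = \<nu>") (auto simp: kr_dist_self)
  assume "\<rho> \<in> convex_deltas E"
  with \<open>\<mu> \<in> convex_deltas E\<close> \<open>\<nu> \<in> convex_deltas E\<close>
  show "kr_dist E \<mu> \<rho> \<le> kr_dist E \<mu> \<nu> + kr_dist E \<nu> \<rho>"
    by (rule kr_dist_triangle)
qed

lemma mspace_kr_space [simp]: "mspace (kr_space E) = convex_deltas E"
  and mdist_kr_space [simp]: "mdist (kr_space E) = kr_dist E"
  by (simp_all add: kr_space_def Metric_space.mspace_metric Metric_space.mdist_metric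
      Metric_space_kr_dist)

lemma kr_dist_convex_delta_le_segment:
  assumes "p \<in> mspace E" "q \<in> mspace E" "s \<in> {0..1}" "t \<in> {0..1}"
  shows "kr_dist E (convex_delta p q s) (convex_delta p q t) \<le> \<bar>s - t\<bar> * mdist E p q"
proof (rule kr_dist_le)
  fix \<phi>
  assume "\<phi> \<in> lip1_funs E"
  have "(t - s) * (\<phi> p - \<phi> q) \<le> \<bar>s - t\<bar> * \<bar>\<phi> p - \<phi> q\<bar>"
    by (metis abs_ge_self abs_minus_commute abs_mult)
  also have "\<dots> \<le> \<bar>s - t\<bar> * mdist E p q"
    using lip1_funs_abs[OF \<open>\<phi> \<in> lip1_funs E\<close> assms(1,2)] by (simp add: mult_left_mono)
  finally show "fs_integral \<phi> (convex_delta p q s) - fs_integral \<phi> (convex_delta p q t)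
      \<le> \<bar>s - t\<bar> * mdist E p q"
    by (simp add: algebra_simps)
qed (use assms in \<open>auto intro: convex_deltasI\<close>)

lemma kr_dist_convex_delta_le_conical:
  assumes "p \<in> mspace E" "q \<in> mspace E" "p' \<in> mspace E" "q' \<in> mspace E" "t \<in> {0..1}"
  shows "kr_dist E (convex_delta p q t) (convex_delta p' q' t) \<le> (1 - t) * mdist E p p' + t * mdist E q q'"
proof (rule kr_dist_le)
  fix \<phi>
  assume "\<phi> \<in> lip1_funs E"
  then have "(1 - t) * (\<phi> p - \<phi> p') + t * (\<phi> q - \<phi> q') \<le> (1 - t) * mdist E p p' + t * mdist E q q'"
    using assms by (intro add_mono mult_left_mono) (auto simp: lip1_funs_def)
  then show "fs_integral \<phi> (convex_delta p q t) - fs_integral \<phi> (convex_delta p' q' t)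
      \<le> (1 - t) * mdist E p p' + t * mdist E q q'"
    by (simp add: algebra_simps)
qed (use assms in \<open>auto intro: convex_deltasI\<close>)

section \<open>Bicombings\<close>

lemma geodesic_pathI:
  fixes P :: "real \<Rightarrow> 'a"
  assumes P0: "P 0 = p" and P1: "P 1 = q" and P: "\<And>s. s \<in> {0..1} \<Longrightarrow> P s \<in> mspace m"
    and le: "\<And>s t. s \<in> {0..1} \<Longrightarrow> t \<in> {0..1} \<Longrightarrow> mdist m (P s) (P t) \<le> \<bar>s - t\<bar> * mdist m p q"
  shows "geodesic_path m P p q"
proof -
  have eq: "mdist m (P s) (P t) = (t - s) * mdist m p q" if st: "s \<in> {0..1}" "t \<in> {0..1}" "s \<le> t" for s t
  proof -
    have "P 0 \<in> mspace m" "P 1 \<in> mspace m" "P s \<in> mspace m" "P t \<in> mspace m"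
      using P st by auto
    then have "mdist m (P 0) (P 1) \<le> mdist m (P 0) (P s) + mdist m (P s) (P t) + mdist m (P t) (P 1)"
      using mdist_triangle[of "P 0" m "P s" "P t"] mdist_triangle[of "P 0" m "P t" "P 1"] by linarith
    then have "mdist m p q \<le> mdist m (P 0) (P s) + mdist m (P s) (P t) + mdist m (P t) (P 1)"
      by (simp add: P0 P1)
    also have "\<dots> \<le> s * mdist m p q + mdist m (P s) (P t) + (1 - t) * mdist m p q"
      using le[of 0 s] le[of t 1] st by (intro add_mono) auto
    finally have "(t - s) * mdist m p q \<le> mdist m (P s) (P t)"
      by (simp add: algebra_simps)
    moreover have "mdist m (P s) (P t) \<le> (t - s) * mdist m p q"
      using le[OF st(1,2)] st(3) by simp
    ultimately show ?thesis
      by linarith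
  qed
  have "mdist m (P s) (P t) = \<bar>s - t\<bar> * mdist m p q" if "s \<in> {0..1}" "t \<in> {0..1}" for s t
    using eq[of s t] eq[of t s] that by (cases "s \<le> t") (auto simp: mdist_commute)
  with P0 P1 P show ?thesis
    by (simp add: geodesic_path_def)
qed

lemma conical_bicombing_imp_bicombing: "conical_bicombing X \<sigma> \<Longrightarrow> bicombing X \<sigma>"
  by (simp add: conical_bicombing_def)

lemma bicombing_mem:
  "bicombing X \<sigma> \<Longrightarrow> x \<in> mspace X \<Longrightarrow> y \<in> mspace X \<Longrightarrow> t \<in> {0..1} \<Longrightarrow> \<sigma> x y t \<in> mspace X"
  by (simp add: bicombing_def geodesic_path_def)

lemma bicombing_dist:
  "bicombing X \<sigma> \<Longrightarrow> x \<in> mspace X \<Longrightarrow> y \<in> mspace X \<Longrightarrow> s \<in> {0..1} \<Longrightarrow> t \<in> {0..1} \<Longrightarrow>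
    mdist X (\<sigma> x y s) (\<sigma> x y t) = \<bar>s - t\<bar> * mdist X x y"
  by (simp add: bicombing_def geodesic_path_def)

lemma bicombing_const:
  assumes "bicombing X \<sigma>" "z \<in> mspace X" "t \<in> {0..1}"
  shows "\<sigma> z z t = z"
proof -
  have "\<sigma> z z 0 = z"
    using assms by (simp add: bicombing_def geodesic_path_def)
  moreover have "mdist X (\<sigma> z z 0) (\<sigma> z z t) = 0"
    using bicombing_dist[OF assms(1,2,2), of 0 t] assms(2,3) by simp
  ultimately show ?thesis
    using bicombing_mem[OF assms(1,2,2,3)] assms(2) by simp
qed

lemma conical_bicombing_le:
  "conical_bicombing X \<sigma> \<Longrightarrow> x \<in> mspace X \<Longrightarrow> y \<in> mspace X \<Longrightarrow> x' \<in> mspace X \<Longrightarrow>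
    y' \<in> mspace X \<Longrightarrow> t \<in> {0..1} \<Longrightarrow>
    mdist X (\<sigma> x y t) (\<sigma> x' y' t) \<le> (1 - t) * mdist X x x' + t * mdist X y y'"
  by (simp add: conical_bicombing_def)

lemma reversible_bicombing_flip:
  "reversible_bicombing X \<sigma> \<Longrightarrow> x \<in> mspace X \<Longrightarrow> y \<in> mspace X \<Longrightarrow> t \<in> {0..1} \<Longrightarrow>
    \<sigma> x y t = \<sigma> y x (1 - t)"
  unfolding reversible_bicombing_def by blast

lemma kr_retraction_bicombing:
  assumes g: "lip1_on (kr_space E) E (convex_deltas E) g"
    and g_delta: "\<And>p. p \<in> mspace E \<Longrightarrow> g (convex_delta p p 0) = p"
  defines "\<sigma> \<equiv> \<lambda>p q t. g (convex_delta p q t)"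
  shows "conical_bicombing E \<sigma> \<and> reversible_bicombing E \<sigma>"
proof -
  have g_le: "mdist E (g \<mu>) (g \<nu>) \<le> kr_dist E \<mu> \<nu>" if "\<mu> \<in> convex_deltas E" "\<nu> \<in> convex_deltas E" for \<mu> \<nu>
    using g that by (simp add: lip1_on_def)
  have \<sigma>_mem: "\<sigma> p q t \<in> mspace E" if "p \<in> mspace E" "q \<in> mspace E" "t \<in> {0..1}" for p q t
    using g convex_deltasI[OF that] unfolding \<sigma>_def lip1_on_def by blast
  have bic: "bicombing E \<sigma>"
    unfolding bicombing_def
  proof (intro ballI geodesic_pathI)
    fix p q
    assume pq: "p \<in> mspace E" "q \<in> mspace E"
    show "\<sigma> p q 0 = p"
      unfolding \<sigma>_def by (subst convex_delta_0) (rule g_delta[OF pq(1)])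
    show "\<sigma> p q 1 = q"
      unfolding \<sigma>_def by (subst convex_delta_1) (rule g_delta[OF pq(2)])
    show "\<sigma> p q s \<in> mspace E" if "s \<in> {0..1}" for s
      using \<sigma>_mem pq that by blast
    show "mdist E (\<sigma> p q s) (\<sigma> p q t) \<le> \<bar>s - t\<bar> * mdist E p q" if "s \<in> {0..1}" "t \<in> {0..1}" for s t
      using g_le[OF convex_deltasI[OF pq that(1)] convex_deltasI[OF pq that(2)]]
        kr_dist_convex_delta_le_segment[OF pq that]
      unfolding \<sigma>_def by linarith
  qed
  have flip: "\<sigma> p q t = \<sigma> q p (1 - t)" for p q t
    unfolding \<sigma>_def by (subst convex_delta_flip) (rule refl)
  have "mdist E (\<sigma> p q t) (\<sigma> p' q' t) \<le> (1 - t) * mdist E p p' + t * mdist E q q'"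
    if "p \<in> mspace E" "q \<in> mspace E" "p' \<in> mspace E" "q' \<in> mspace E" "t \<in> {0..1}" for p q p' q' t
    using g_le[OF convex_deltasI[OF that(1,2,5)] convex_deltasI[OF that(3,4,5)]]
      kr_dist_convex_delta_le_conical[OF that]
    unfolding \<sigma>_def by linarith
  with bic have "conical_bicombing E \<sigma>"
    by (simp add: conical_bicombing_def)
  moreover have "reversible_bicombing E \<sigma>"
    unfolding reversible_bicombing_def by (intro conjI bic ballI flip)
  ultimately show ?thesis ..
qed

section \<open>Injective hulls\<close>

lemma isometric_embedding_mem:
  "isometric_embedding X E e \<Longrightarrow> x \<in> mspace X \<Longrightarrow> e x \<in> mspace E"
  by (auto simp: isometric_embedding_def)

lemma isometric_embedding_mdist:
  "isometric_embedding X E e \<Longrightarrow> x \<in> mspace X \<Longrightarrow> y \<in> mspace X \<Longrightarrow> mdist E (e x) (e y) = mdist X x y"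
  by (simp add: isometric_embedding_def)

lemma injective_hullD:
  assumes "injective_hull TC TD X E e"
  shows "injective_metric_space TC E" "isometric_embedding X E e"
  using assms by (simp_all add: injective_hull_def)

lemma injective_hull_dist_le_imp_eq:
  fixes X :: "'a metric" and E :: "'b metric"
  assumes hull: "injective_hull TYPE('b option) TYPE('b) X E e"
    and p: "p \<in> mspace E" and q: "q \<in> mspace E"
    and le: "\<And>z. z \<in> mspace X \<Longrightarrow> mdist E q (e z) \<le> mdist E p (e z)"
    and z: "z \<in> mspace X"
  shows "mdist E q (e z) = mdist E p (e z)"
proof -
  note iso = injective_hullD(2)[OF hull]
  note eX = isometric_embedding_mem[OF iso]
  \<comment> \<open>The map fixing \<open>e(X)\<close> and sending \<open>p\<close> to \<open>q\<close> is nonexpansive; its extension to \<open>E\<close>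
    is an isometry by minimality of the hull.\<close>
  have "nonexpansive_rel E E ((\<lambda>x. (e x, e x)) ` mspace X)"
    using eX by (auto simp: nonexpansive_rel_def pairwise_def)
  then have "nonexpansive_rel E E (insert (p, q) ((\<lambda>x. (e x, e x)) ` mspace X))"
    using p q le by (intro nonexpansive_rel_insertI) auto
  then obtain F where F: "lip1_on E E (mspace E) F" "F p = q" "\<And>x. x \<in> mspace X \<Longrightarrow> F (e x) = e x"
    using injective_nonexpansive_rel_extension[OF injective_hullD(1)[OF hull]] by fastforce
  have "isometric_embedding X E (F \<circ> e)"
    using iso F(3) by (simp add: isometric_embedding_def)
  then have "isometric_embedding E E F"
    using hull F(1) by (simp add: injective_hull_def)
  then have "mdist E (F p) (F (e z)) = mdist E p (e z)"
    using p eX[OF z] by (simp add: isometric_embedding_def)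
  then show ?thesis
    using F(2) F(3)[OF z] by simp
qed

lemma injective_hull_extremal:
  fixes X :: "'a metric" and E :: "'b metric"
  assumes hull: "injective_hull TYPE('b option) TYPE('b) X E e"
    and p: "p \<in> mspace E" and w: "w \<in> mspace X" and "0 < \<epsilon>"
  shows "\<exists>z\<in>mspace X. mdist E p (e w) + mdist E p (e z) \<le> mdist X w z + \<epsilon>"
proof (rule ccontr)
  assume "\<not> ?thesis"
  then have far: "mdist X w z + \<epsilon> < mdist E p (e w) + mdist E p (e z)" if "z \<in> mspace X" for z
    using that by force
  note eX = isometric_embedding_mem[OF injective_hullD(2)[OF hull]]
    and ed = isometric_embedding_mdist[OF injective_hullD(2)[OF hull]]
  \<comment> \<open>Even after shrinking the radius at \<open>e w\<close>, the balls \<open>B(e z, d(p, e z))\<close> have a common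
    point \<open>q\<close>, contradicting the previous lemma.\<close>
  define \<rho> where "\<rho> z = mdist E p (e z) - (if z = w then \<epsilon> / 2 else 0)" for z
  have "mdist E (e z) (e z') \<le> \<rho> z + \<rho> z'" if z: "z \<in> mspace X" "z' \<in> mspace X" for z z'
  proof -
    have "mdist E (e z) (e z') \<le> mdist E p (e z) + mdist E p (e z')"
      using mdist_triangle[of "e z" E p "e z'"] p eX[OF z(1)] eX[OF z(2)] by (simp add: mdist_commute)
    moreover have "mdist E (e z) (e z') + \<epsilon> \<le> mdist E p (e z) + mdist E p (e z')"
      if "z = w \<or> z' = w"
      using that far[OF z(1)] far[OF z(2)] ed[OF z] by (auto simp: mdist_commute)
    moreover have "\<epsilon> < 2 * mdist E p (e w)"
      using far[OF w] w by simp
    ultimately show ?thesis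
      unfolding \<rho>_def by (cases "z = w"; cases "z' = w") auto
  qed
  then obtain q where q: "q \<in> mspace E" "\<And>z. z \<in> mspace X \<Longrightarrow> mdist E q (e z) \<le> \<rho> z"
    using injective_hyperconvex[OF injective_hullD(1)[OF hull], of "mspace X" e \<rho>] eX by blast
  have "mdist E q (e z) \<le> mdist E p (e z)" if "z \<in> mspace X" for z
    using q(2)[OF that] \<open>0 < \<epsilon>\<close> by (simp add: \<rho>_def split: if_splits)
  then have "mdist E q (e w) = mdist E p (e w)"
    using injective_hull_dist_le_imp_eq[OF hull p q(1) _ w] by blast
  then show False
    using q(2)[OF w] \<open>0 < \<epsilon>\<close> by (simp add: \<rho>_def)
qed

lemma injective_hull_dist_bicombing_convex:
  fixes X :: "'a metric" and E :: "'b metric"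
  assumes hull: "injective_hull TYPE('b option) TYPE('b) X E e" and \<sigma>: "conical_bicombing X \<sigma>"
    and p: "p \<in> mspace E" and x: "x \<in> mspace X" and y: "y \<in> mspace X" and t: "t \<in> {0..1}"
  shows "mdist E p (e (\<sigma> x y t)) \<le> (1 - t) * mdist E p (e x) + t * mdist E p (e y)"
proof (rule field_le_epsilon)
  fix \<epsilon> :: real
  assume "0 < \<epsilon>"
  note eX = isometric_embedding_mem[OF injective_hullD(2)[OF hull]]
    and ed = isometric_embedding_mdist[OF injective_hullD(2)[OF hull]]
  note bic = conical_bicombing_imp_bicombing[OF \<sigma>]
  have m: "\<sigma> x y t \<in> mspace X"
    by (rule bicombing_mem[OF bic x y t])
  obtain z where z: "z \<in> mspace X"
    and extr: "mdist E p (e (\<sigma> x y t)) + mdist E p (e z) \<le> mdist X (\<sigma> x y t) z + \<epsilon>"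
    using injective_hull_extremal[OF hull p m \<open>0 < \<epsilon>\<close>] by blast
  have "mdist X (\<sigma> x y t) z = mdist X (\<sigma> x y t) (\<sigma> z z t)"
    using bicombing_const[OF bic z t] by simp
  also have "\<dots> \<le> (1 - t) * mdist X x z + t * mdist X y z"
    by (rule conical_bicombing_le[OF \<sigma> x y z z t])
  also have "\<dots> \<le> (1 - t) * (mdist E p (e x) + mdist E p (e z)) + t * (mdist E p (e y) + mdist E p (e z))"
  proof -
    have "mdist X u z \<le> mdist E p (e u) + mdist E p (e z)" if "u \<in> mspace X" for u
      using mdist_triangle[of "e u" E p "e z"] ed[OF that z] eX[OF that] eX[OF z] p
      by (simp add: mdist_commute)
    then show ?thesis
      using t x y by (intro add_mono mult_left_mono) auto
  qed
  finally show "mdist E p (e (\<sigma> x y t)) \<le> (1 - t) * mdist E p (e x) + t * mdist E p (e y) + \<epsilon>"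
    using extr by (simp add: algebra_simps)
qed

section \<open>Extension of the bicombing\<close>

lemma bicombing_dist_le_kr_dist_matched_ordered:
  fixes X :: "'a metric" and E :: "'b metric"
  assumes iso: "isometric_embedding X E e" and \<sigma>: "conical_bicombing X \<sigma>"
    and x: "x \<in> mspace X" and y: "y \<in> mspace X" and x': "x' \<in> mspace X" and y': "y' \<in> mspace X"
    and t: "t \<in> {0..1}" and s: "s \<in> {0..1}" and "t \<le> s"
    and matched: "mdist X x x' + mdist X y y' \<le> mdist X x y' + mdist X y x'"
  shows "mdist X (\<sigma> x y t) (\<sigma> x' y' s)
    \<le> kr_dist E (convex_delta (e x) (e y) t) (convex_delta (e x') (e y') s)"
proof -
  note bic = conical_bicombing_imp_bicombing[OF \<sigma>]
  note eX = isometric_embedding_mem[OF iso] and ed = isometric_embedding_mdist[OF iso]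
  define \<phi> where "\<phi> w = min (mdist E w (e y') - mdist X x y') (mdist E w (e x') - mdist X x x')" for w
  have "mdist X (\<sigma> x y t) (\<sigma> x' y' s) \<le> mdist X (\<sigma> x y t) (\<sigma> x y' t)
      + mdist X (\<sigma> x y' t) (\<sigma> x y' s) + mdist X (\<sigma> x y' s) (\<sigma> x' y' s)"
    using mdist_triangle[of "\<sigma> x y t" X "\<sigma> x y' t" "\<sigma> x' y' s"]
      mdist_triangle[of "\<sigma> x y' t" X "\<sigma> x y' s" "\<sigma> x' y' s"]
      bicombing_mem[OF bic] x y x' y' t s by (smt (verit))
  also have "\<dots> \<le> t * mdist X y y' + (s - t) * mdist X x y' + (1 - s) * mdist X x x'"
    using conical_bicombing_le[OF \<sigma> x y x y' t] conical_bicombing_le[OF \<sigma> x y' x' y' s]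
      bicombing_dist[OF bic x y' t s] \<open>t \<le> s\<close> x y' by simp
  also have "\<dots> \<le> fs_integral \<phi> (convex_delta (e x) (e y) t) - fs_integral \<phi> (convex_delta (e x') (e y') s)"
  proof -
    have "mdist X y y' - mdist X x y' \<le> \<phi> (e y)" "\<phi> (e x') \<le> - mdist X x x'"
      "\<phi> (e y') \<le> - mdist X x y'"
      using matched x y x' y' eX by (auto simp: \<phi>_def ed)
    then have "t * (mdist X y y' - mdist X x y') \<le> t * \<phi> (e y)"
      "(1 - s) * \<phi> (e x') \<le> (1 - s) * (- mdist X x x')" "s * \<phi> (e y') \<le> s * (- mdist X x y')"
      using t s by (intro mult_left_mono; simp)+
    moreover have "\<phi> (e x) = 0"
      using x x' y' by (simp add: \<phi>_def ed)
    ultimately show ?thesis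
      by (simp add: algebra_simps)
  qed
  also have "\<dots> \<le> kr_dist E (convex_delta (e x) (e y) t) (convex_delta (e x') (e y') s)"
  proof (rule kr_dist_ge)
    show "\<phi> \<in> lip1_funs E"
      unfolding \<phi>_def using x' y' eX
      by (intro lip1_funs_min lip1_funs_diff_const lip1_funs_mdist) auto
  qed (use x y x' y' t s eX in \<open>auto intro: convex_deltasI\<close>)
  finally show ?thesis .
qed

lemma bicombing_dist_le_kr_dist_matched:
  fixes X :: "'a metric" and E :: "'b metric"
  assumes iso: "isometric_embedding X E e" and \<sigma>: "conical_bicombing X \<sigma>"
    and x: "x \<in> mspace X" and y: "y \<in> mspace X" and x': "x' \<in> mspace X" and y': "y' \<in> mspace X"
    and t: "t \<in> {0..1}" and s: "s \<in> {0..1}"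
    and matched: "mdist X x x' + mdist X y y' \<le> mdist X x y' + mdist X y x'"
  shows "mdist X (\<sigma> x y t) (\<sigma> x' y' s)
    \<le> kr_dist E (convex_delta (e x) (e y) t) (convex_delta (e x') (e y') s)"
proof (cases "t \<le> s")
  case True
  with bicombing_dist_le_kr_dist_matched_ordered[OF assms(1-8)] matched show ?thesis
    by blast
next
  case False
  have "mdist X x' x + mdist X y' y \<le> mdist X x' y + mdist X y' x"
    using matched by (simp add: mdist_commute)
  with bicombing_dist_le_kr_dist_matched_ordered[OF iso \<sigma> x' y' x y s t] False show ?thesis
    by (simp add: mdist_commute kr_dist_commute)
qed

lemma bicombing_dist_le_kr_dist:
  fixes X :: "'a metric" and E :: "'b metric"
  assumes iso: "isometric_embedding X E e"
    and \<sigma>: "conical_bicombing X \<sigma>" and rev: "reversible_bicombing X \<sigma>"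
    and x: "x \<in> mspace X" and y: "y \<in> mspace X" and x': "x' \<in> mspace X" and y': "y' \<in> mspace X"
    and t: "t \<in> {0..1}" and s: "s \<in> {0..1}"
  shows "mdist X (\<sigma> x y t) (\<sigma> x' y' s)
    \<le> kr_dist E (convex_delta (e x) (e y) t) (convex_delta (e x') (e y') s)"
proof (cases "mdist X x x' + mdist X y y' \<le> mdist X x y' + mdist X y x'")
  case True
  with bicombing_dist_le_kr_dist_matched[OF assms(1,2,4-9)] show ?thesis .
next
  case False
  \<comment> \<open>reversing the second geodesic makes the endpoints matched\<close>
  have "mdist X (\<sigma> x y t) (\<sigma> y' x' (1 - s))
    \<le> kr_dist E (convex_delta (e x) (e y) t) (convex_delta (e y') (e x') (1 - s))"
    using False s by (intro bicombing_dist_le_kr_dist_matched[OF iso \<sigma> x y y' x' t]) auto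
  then show ?thesis
    using reversible_bicombing_flip[OF rev x' y' s] convex_delta_flip[of "e x'" "e y'" s] by simp
qed

lemma fs_integral_mdist_le_kr_dist_delta:
  assumes "p \<in> mspace E" "\<nu> \<in> convex_deltas E"
  shows "fs_integral (\<lambda>w. mdist E w p) \<nu> \<le> kr_dist E \<nu> (convex_delta p p 0)"
proof -
  have "fs_integral (\<lambda>w. mdist E w p) \<nu> - fs_integral (\<lambda>w. mdist E w p) (convex_delta p p 0)
      \<le> kr_dist E \<nu> (convex_delta p p 0)"
    using assms by (intro kr_dist_ge convex_deltasI lip1_funs_mdist) auto
  then show ?thesis
    using assms(1) by simp
qed

definition bicombing_graph ::
    "'a metric \<Rightarrow> 'b metric \<Rightarrow> ('a \<Rightarrow> 'b) \<Rightarrow> ('a \<Rightarrow> 'a \<Rightarrow> real \<Rightarrow> 'a) \<Rightarrow> (('b \<Rightarrow> real) \<times> 'b) set" where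
  "bicombing_graph X E e \<sigma> = {(convex_delta p p 0, p) |p. p \<in> mspace E} \<union>
     {(convex_delta (e x) (e y) t, e (\<sigma> x y t)) |x y t. x \<in> mspace X \<and> y \<in> mspace X \<and> t \<in> {0..1}}"

lemma nonexpansive_bicombing_graph:
  fixes X :: "'a metric" and E :: "'b metric"
  assumes hull: "injective_hull TYPE('b option) TYPE('b) X E e"
    and \<sigma>: "conical_bicombing X \<sigma>" and rev: "reversible_bicombing X \<sigma>"
  shows "nonexpansive_rel (kr_space E) E (bicombing_graph X E e \<sigma>)"
proof -
  note iso = injective_hullD(2)[OF hull]
  note eX = isometric_embedding_mem[OF iso]
  note bic = conical_bicombing_imp_bicombing[OF \<sigma>]
  have G: "bicombing_graph X E e \<sigma> \<subseteq> convex_deltas E \<times> mspace E"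
    using eX bicombing_mem[OF bic] by (auto simp: bicombing_graph_def intro: convex_deltasI)
  \<comment> \<open>against a pair \<open>(\<delta>\<^sub>p, p)\<close>, test with \<open>d(\<cdot>, p)\<close> and use convexity along \<open>\<sigma>\<close>\<close>
  have delta: "mdist E v p \<le> kr_dist E \<nu> (convex_delta p p 0)"
    if "(\<nu>, v) \<in> bicombing_graph X E e \<sigma>" "p \<in> mspace E" for \<nu> v p
  proof -
    have "mdist E v p \<le> fs_integral (\<lambda>w. mdist E w p) \<nu>"
      using that injective_hull_dist_bicombing_convex[OF hull \<sigma> \<open>p \<in> mspace E\<close>]
      by (auto simp: bicombing_graph_def mdist_commute)
    also have "\<dots> \<le> kr_dist E \<nu> (convex_delta p p 0)"
      using that G by (intro fs_integral_mdist_le_kr_dist_delta) auto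
    finally show ?thesis .
  qed
  have "mdist E u v \<le> kr_dist E \<mu> \<nu>"
    if "(\<mu>, u) \<in> bicombing_graph X E e \<sigma>" "(\<nu>, v) \<in> bicombing_graph X E e \<sigma>" for \<mu> u \<nu> v
    using that delta[OF that(1)] delta[OF that(2)]
      bicombing_dist_le_kr_dist[OF iso \<sigma> rev] isometric_embedding_mdist[OF iso] bicombing_mem[OF bic]
    by (auto simp: bicombing_graph_def mdist_commute kr_dist_commute)
  with G show ?thesis
    by (auto simp: nonexpansive_rel_def pairwise_def)
qed

theorem theorem1p1:
  fixes X :: "'a metric" and E :: "'b metric" and e :: "'a \<Rightarrow> 'b"
    and \<sigma> :: "'a \<Rightarrow> 'a \<Rightarrow> real \<Rightarrow> 'a"
  assumes "conical_bicombing X \<sigma>" and "reversible_bicombing X \<sigma>"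
    and "injective_hull TYPE('b option) TYPE('b) X E e"
  shows "\<exists>\<sigma>' :: 'b \<Rightarrow> 'b \<Rightarrow> real \<Rightarrow> 'b.
           conical_bicombing E \<sigma>' \<and> reversible_bicombing E \<sigma>' \<and>
           (\<forall>x\<in>mspace X. \<forall>y\<in>mspace X. \<forall>t\<in>{0..1}. e (\<sigma> x y t) = \<sigma>' (e x) (e y) t)"
proof -
  obtain g where g: "lip1_on (kr_space E) E (convex_deltas E) g"
    and g_graph: "\<And>\<mu> u. (\<mu>, u) \<in> bicombing_graph X E e \<sigma> \<Longrightarrow> g \<mu> = u"
    using injective_nonexpansive_rel_extension[OF injective_hullD(1)[OF assms(3)]
        nonexpansive_bicombing_graph[OF assms(3,1,2)]]
    by fastforce
  have "g (convex_delta p p 0) = p" if "p \<in> mspace E" for p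
    using that by (intro g_graph) (auto simp: bicombing_graph_def)
  with g have "conical_bicombing E (\<lambda>p q t. g (convex_delta p q t)) \<and>
      reversible_bicombing E (\<lambda>p q t. g (convex_delta p q t))"
    by (rule kr_retraction_bicombing)
  moreover have "e (\<sigma> x y t) = g (convex_delta (e x) (e y) t)"
    if "x \<in> mspace X" "y \<in> mspace X" "t \<in> {0..1}" for x y t
    using that by (intro g_graph[symmetric]) (auto simp: bicombing_graph_def)
  ultimately show ?thesis
    by blast
qed

end
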